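(* Let $z\in\mathbb{C}$ with $\mathrm{Im}(z)>0$, $q=e^{2\pi i z}$ (with $q^{\alpha}:=e^{2\pi i\alpha z}$ for real $\alpha$), let $a>0$ and $b\in\mathbb{R}$. Put $$\psi_1(t,q)=\sum_{n=1}^{\infty}(-1)^n n\,q^{an^2+bn}\cos(2nt),\qquad \psi_2(t,q)=-\sum_{n=1}^{\infty}(-1)^n n\,q^{an^2-bn}\cos(2nt).$$ Then $$\int_0^{\pi}\psi_1(t,q)\log\left(\frac{\vartheta_4(t,q)}{\vartheta_4(0,q)}\right)dt=-\pi\sum_{n=1}^{\infty}\frac{(-1)^nq^{an^2+(b+1)n}}{1-q^{2n}},$$ $$\int_0^{\pi}\psi_2(t,q)\log\left(\frac{\vartheta_4(t,q)}{\vartheta_4(0,q)}\right)dt=\pi\sum_{n=1}^{\infty}\frac{(-1)^nq^{an^2+(-b+1)n}}{1-q^{2n}}.$$ Consequently, with $\psi(t,q)=\psi_1(t,q)+\psi_2(t,q)=\sum_{n=-\infty}^{\infty}(-1)^nq^{an^2+bn}n\cos(2nt)$ and $I=\int_0^{\pi}\psi(t,q)\log\left(\frac{\vartheta_4(t,q)}{\vartheta_4(0,q)}\right)dt$, one has $$I=-\pi\sum_{n\in\mathbb{Z}\setminus\{0\}}\frac{(-1)^nq^{an^2+bn}}{q^{-n}-q^{n}} \quad\text{and}\quad \frac{I}{\pi}=\frac{1}{2}\sum_{n\in\mathbb{Z}\setminus\{0\}}\frac{(-1)^n\exp\left(2\pi i(an^2+bn)z\right)}{\sinh(2\pi i n 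z)}.$$
   Context: $\vartheta_4(t,q)=\sum_{n=-\infty}^{\infty}(-1)^nq^{n^2}e^{2int}$. The logarithm $\log(\vartheta_4(t,q)/\vartheta_4(0,q))$ is the branch continuous in $t\in[0,\pi]$ that vanishes at $t=0$. *)

theory Defs
  imports "HOL-Analysis.Analysis"
begin

text \<open>Nome power convention: for q = exp(2 pi i z) and real alpha,
  q^alpha := exp(2 pi i alpha z).\<close>
definition qpow :: "complex \<Rightarrow> real \<Rightarrow> complex" where
  "qpow z \<alpha> = exp (2 * of_real pi * \<i> * of_real \<alpha> * z)"

definition theta4 :: "complex \<Rightarrow> real \<Rightarrow> complex" where
  "theta4 z t = (\<Sum>\<^sub>\<infinity>n::int. (-1) powi n * qpow z (of_int n ^ 2)
                    * exp (2 * \<i> * of_int n * of_real t))"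

definition psi1 :: "complex \<Rightarrow> real \<Rightarrow> real \<Rightarrow> real \<Rightarrow> complex" where
  "psi1 z a b t = (\<Sum>m. let n = Suc m in
      (-1) ^ n * of_nat n * qpow z (a * real n ^ 2 + b * real n)
      * of_real (cos (2 * real n * t)))"

definition psi2 :: "complex \<Rightarrow> real \<Rightarrow> real \<Rightarrow> real \<Rightarrow> complex" where
  "psi2 z a b t = - (\<Sum>m. let n = Suc m in
      (-1) ^ n * of_nat n * qpow z (a * real n ^ 2 - b * real n)
      * of_real (cos (2 * real n * t)))"

definition psi :: "complex \<Rightarrow> real \<Rightarrow> real \<Rightarrow> real \<Rightarrow> complex" where
  "psi z a b t = psi1 z a b t + psi2 z a b t"

end

theory Submission
  imports Defs "HOL-Real_Asymp.Real_Asymp"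
begin

(* The power series E(y) of the product of 1 - q^(2j+1) y over j >= 0 is entire and satisfies
   E(y) = (1 - q y) E(q^2 y).  Hence the Laurent coefficients c_m of E(y) E(1/y), computed as
   Fourier coefficients on circles, obey c_m = -q^(2m-1) c_(m-1), i.e. c_m = (-1)^m q^(m^2) c_0:
   theta_4 is c_0^-1 E(e^(2it)) E(e^(-2it)), a form of Jacobi's triple product.  Taking logarithms
   factor by factor and expanding ln(1 - w) gives the continuous branch
     log (theta_4(t) / theta_4(0)) = sum_j sum_k 2 q^((2j+1)k) / k * (1 - cos 2kt),
   unique since two continuous logarithms vanishing at 0 agree on [0, pi].  By orthogonality,
   its n-th cosine coefficient is integral_0^pi cos(2nt) log(...) dt = -pi q^n / (n (1 - q^(2n))),
   and integrating psi_1 and psi_2 termwise yields the two series; the sums over the nonzero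
   integers combine them, using psi_2(b) = -psi_1(-b). *)

lemma norm_ln_one_minus_le:
  fixes u :: complex
  assumes u: "norm u < 1"
  shows "norm (ln (1 - u)) \<le> norm u / (1 - norm u)"
proof -
  have "(\<lambda>n. - (u ^ n) / of_nat n) sums ln (1 - u)"
    using Ln_series'[of "-u"] u by simp
  then have ln_sums: "(\<lambda>n. - (u ^ Suc n) / of_nat (Suc n)) sums ln (1 - u)"
    using sums_Suc_iff[of "\<lambda>n. - (u ^ n) / of_nat n"] by simp
  have geom: "(\<lambda>n. norm u * norm u ^ n) sums (norm u / (1 - norm u))"
    using sums_mult[OF geometric_sums[of "norm u"], of "norm u"] u by simp
  have le: "norm (- (u ^ Suc n) / of_nat (Suc n)) \<le> norm u * norm u ^ n" for n
  proof -
    have "norm (- (u ^ Suc n) / of_nat (Suc n)) = norm u ^ Suc n / real (Suc n)"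
      by (simp only: norm_divide norm_minus_cancel norm_power norm_of_nat)
    also have "\<dots> \<le> norm u ^ Suc n / 1"
      by (rule divide_left_mono) auto
    finally show ?thesis by simp
  qed
  have "summable (\<lambda>n. norm (- (u ^ Suc n) / of_nat (Suc n)))"
    by (rule summable_comparison_test'[OF sums_summable[OF geom]]) (use le in auto)
  then have "norm (ln (1 - u)) \<le> (\<Sum>n. norm u * norm u ^ n)"
    using sums_unique[OF ln_sums] summable_norm suminf_le[OF le _ sums_summable[OF geom]]
    by (metis order_trans)
  then show ?thesis
    using sums_unique[OF geom] by simp
qed

lemma has_integral_suminf:
  fixes f :: "nat \<Rightarrow> real \<Rightarrow> 'a::banach"
  assumes cont: "\<And>n. continuous_on {a..b} (f n)"
    and bound: "\<And>n t. t \<in> {a..b} \<Longrightarrow> norm (f n t) \<le> M n" and M: "summable M"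
    and int: "\<And>n. (f n has_integral I n) {a..b}"
  shows "summable I" and "((\<lambda>t. \<Sum>n. f n t) has_integral (\<Sum>n. I n)) {a..b}"
proof -
  have unif: "uniform_limit {a..b} (\<lambda>N t. \<Sum>n<N. f n t) (\<lambda>t. \<Sum>n. f n t) sequentially"
    by (rule Weierstrass_m_test[OF bound M])
  have cont_sum: "continuous_on {a..b} (\<lambda>t. \<Sum>n<N. f n t)" for N
    by (intro continuous_on_sum cont)
  obtain I' J where I': "\<And>N. ((\<lambda>t. \<Sum>n<N. f n t) has_integral I' N) {a..b}"
    and J: "((\<lambda>t. \<Sum>n. f n t) has_integral J) {a..b}" and lim: "I' \<longlonglongrightarrow> J"
    using uniform_limit_integral[OF unif cont_sum] by auto
  have "((\<lambda>t. \<Sum>n<N. f n t) has_integral (\<Sum>n<N. I n)) {a..b}" for N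
    by (intro has_integral_sum) (auto intro: int)
  then have "I' = (\<lambda>N. \<Sum>n<N. I n)"
    using I' has_integral_unique by blast
  with lim have "I sums J"
    by (simp add: sums_def)
  then show "summable I" and "((\<lambda>t. \<Sum>n. f n t) has_integral (\<Sum>n. I n)) {a..b}"
    using J by (auto simp: sums_iff)
qed

lemma has_integral_cis_power_int:
  "((\<lambda>t. cis (2 * t) powi p) has_integral (if p = 0 then of_real pi else 0)) {0..pi}"
proof (cases "p = 0")
  case True
  then show ?thesis
    using has_integral_const_real[of "1::complex" 0 pi] by (simp add: scaleR_conv_of_real)
next
  case False
  define A where "A = 2 * \<i> * (of_int p :: complex)"
  have A: "A \<noteq> 0"
    using False by (simp add: A_def)
  have cis_eq: "cis (2 * t) powi p = exp (t *\<^sub>R A)" for t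
    unfolding cis_power_int unfolding cis_conv_exp A_def by (simp add: scaleR_conv_of_real mult_ac)
  have "((\<lambda>t. exp (t *\<^sub>R A) / A) has_vector_derivative exp (t *\<^sub>R A)) (at t within {0..pi})" for t
    using has_vector_derivative_divide[OF exp_scaleR_has_vector_derivative_right[of A t "{0..pi}"], of A] A
    by simp
  then have "((\<lambda>t. exp (t *\<^sub>R A)) has_integral (exp (pi *\<^sub>R A) / A - exp (0 *\<^sub>R A) / A)) {0..pi}"
    by (intro fundamental_theorem_of_calculus) auto
  moreover have "exp (pi *\<^sub>R A) = 1"
    using cis_eq[of pi] by (simp add: cis_power_int)
  ultimately show ?thesis
    using False by (simp add: cis_eq)
qed

lemma of_real_cos_eq_cis:
  "(of_real (cos x) :: complex) = (cis x + cis (- x)) / 2"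
  by (simp add: complex_eq_iff)

lemma cos_eq_cis_power_int:
  "(of_real (cos (2 * of_int p * t)) :: complex) = (cis (2 * t) powi p + cis (2 * t) powi (- p)) / 2"
  unfolding cis_power_int of_real_cos_eq_cis by (simp add: mult_ac)

lemma cos_mult_cos_eq_cis_power_int:
  fixes n k :: int and t :: real
  defines "x \<equiv> cis (2 * t)"
  shows "(of_real (cos (2 * of_int n * t)) * of_real (cos (2 * of_int k * t)) :: complex)
    = (x powi (n + k) + x powi (n - k) + x powi (k - n) + x powi (- n - k)) / 4"
proof -
  have x: "x \<noteq> 0"
    by (simp add: x_def)
  have "(of_real (cos (2 * of_int n * t)) * of_real (cos (2 * of_int k * t)) :: complex)
    = (x powi n * x powi k + x powi n * x powi (- k) + x powi (- n) * x powi k + x powi (- n) * x powi (- k)) / 4"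
    unfolding cos_eq_cis_power_int x_def[symmetric] by (simp add: field_simps)
  also have "\<dots> = (x powi (n + k) + x powi (n + - k) + x powi (- n + k) + x powi (- n + - k)) / 4"
    by (simp only: power_int_add[OF disjI1[OF x]])
  finally show ?thesis
    by (simp only: diff_conv_add_uminus add.commute[of "- n" k])
qed

lemma has_integral_cos_mult_cos:
  assumes "n \<noteq> 0"
  shows "((\<lambda>t. of_real (cos (2 * real n * t)) * of_real (cos (2 * real k * t)) :: complex) has_integral
           (if k = n then of_real pi / 2 else 0)) {0..pi}"
proof -
  define v where "v p = (if p = 0 then complex_of_real pi else 0)" for p :: int
  have "((\<lambda>t. (cis (2 * t) powi (int n + int k) + cis (2 * t) powi (int n - int k)
      + cis (2 * t) powi (int k - int n) + cis (2 * t) powi (- int n - int k)) / 4)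
      has_integral ((v (int n + int k) + v (int n - int k) + v (int k - int n) + v (- int n - int k)) / 4)) {0..pi}"
    unfolding v_def by (intro has_integral_divide has_integral_add has_integral_cis_power_int)
  moreover have "(v (int n + int k) + v (int n - int k) + v (int k - int n) + v (- int n - int k)) / 4
      = (if k = n then of_real pi / 2 else 0)"
    using assms by (auto simp: v_def)
  moreover have "of_real (cos (2 * real n * t)) * of_real (cos (2 * real k * t))
      = (cis (2 * t) powi (int n + int k) + cis (2 * t) powi (int n - int k)
        + cis (2 * t) powi (int k - int n) + cis (2 * t) powi (- int n - int k)) / 4" for t
    using cos_mult_cos_eq_cis_power_int[of "int n" t "int k"] by simp
  ultimately show ?thesis
    by (simp only:)
qed

lemma has_integral_cos:
  assumes "n \<noteq> 0"
  shows "((\<lambda>t. of_real (cos (2 * real n * t)) :: complex) has_integral 0) {0..pi}"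
  using has_integral_cos_mult_cos[OF assms, of 0] assms by simp

(* For u = q^(2j+1), the logarithm of the j-th factor pair of the product for theta4 z t / theta4 z 0. *)
definition ln_factor_ratio :: "complex \<Rightarrow> real \<Rightarrow> complex" where
  "ln_factor_ratio u t = ln (1 - u * cis (2 * t)) + ln (1 - u * cis (- (2 * t))) - 2 * ln (1 - u)"

lemma ln_factor_ratio_sums:
  assumes u: "norm u < 1"
  shows "(\<lambda>k. 2 * u ^ k / of_nat k * (1 - of_real (cos (2 * real k * t)))) sums ln_factor_ratio u t"
proof -
  have ln_sums: "(\<lambda>k. - (w ^ k) / of_nat k) sums ln (1 - w)" if "norm w < 1" for w :: complex
    using Ln_series'[of "-w"] that by simp
  have "(\<lambda>k. - ((u * cis (2 * t)) ^ k) / of_nat k + - ((u * cis (- (2 * t))) ^ k) / of_nat k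
      - 2 * (- (u ^ k) / of_nat k)) sums ln_factor_ratio u t"
    unfolding ln_factor_ratio_def using u
    by (intro sums_diff sums_add sums_mult ln_sums) (simp_all add: norm_mult)
  moreover have "- ((u * cis (2 * t)) ^ k) / of_nat k + - ((u * cis (- (2 * t))) ^ k) / of_nat k
      - 2 * (- (u ^ k) / of_nat k) = 2 * u ^ k / of_nat k * (1 - of_real (cos (2 * real k * t)))" for k
  proof -
    have "- ((u * cis (2 * t)) ^ k) / of_nat k + - ((u * cis (- (2 * t))) ^ k) / of_nat k
        - 2 * (- (u ^ k) / of_nat k) = u ^ k / of_nat k * (2 - (cis (2 * t) ^ k + cis (- (2 * t)) ^ k))"
      by (cases "k = 0") (simp_all add: power_mult_distrib field_simps)
    also have "cis (2 * t) ^ k + cis (- (2 * t)) ^ k = 2 * of_real (cos (2 * real k * t))"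
      by (simp add: Complex.DeMoivre complex_eq_iff mult_ac)
    finally show ?thesis
      by (simp add: algebra_simps)
  qed
  ultimately show ?thesis
    by simp
qed

lemma norm_ln_factor_ratio_le:
  assumes u: "norm u < 1"
  shows "norm (ln_factor_ratio u t) \<le> 4 * (norm u / (1 - norm u))"
proof -
  have bound: "norm (ln (1 - u * w)) \<le> norm u / (1 - norm u)" if "norm w = 1" for w
    using norm_ln_one_minus_le[of "u * w"] u that by (simp add: norm_mult)
  define a b c where "a = ln (1 - u * cis (2 * t))" and "b = ln (1 - u * cis (- (2 * t)))"
    and "c = ln (1 - u)"
  have "norm (ln_factor_ratio u t) \<le> norm (a + b) + norm (2 * c)"
    unfolding ln_factor_ratio_def a_def b_def c_def by (rule norm_triangle_ineq4)
  also have "\<dots> \<le> norm a + norm b + 2 * norm c"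
    using norm_triangle_ineq[of a b] by (simp add: norm_mult)
  also have "\<dots> \<le> 4 * (norm u / (1 - norm u))"
    using bound[of "cis (2 * t)"] bound[of "cis (- (2 * t))"] bound[of 1]
    by (simp add: a_def b_def c_def)
  finally show ?thesis .
qed

lemma continuous_on_ln_factor_ratio:
  assumes u: "norm u < 1"
  shows "continuous_on A (ln_factor_ratio u)"
proof -
  have "continuous_on A (\<lambda>t. ln (1 - u * f t))" if f: "continuous_on A f" "\<And>t. norm (f t) = 1" for f
  proof (rule continuous_on_Ln')
    show "continuous_on A (\<lambda>t. 1 - u * f t)"
      by (intro continuous_intros f)
    fix t
    have "Re (u * f t) < 1"
      using complex_Re_le_cmod[of "u * f t"] u f(2)[of t] by (simp add: norm_mult)
    then show "1 - u * f t \<notin> \<real>\<^sub>\<le>\<^sub>0"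
      by (auto simp: complex_nonpos_Reals_iff)
  qed
  note ln_cont = this
  have "continuous_on A (\<lambda>t. ln (1 - u * cis (2 * t)))" "continuous_on A (\<lambda>t. ln (1 - u * cis (- (2 * t))))"
    "continuous_on A (\<lambda>t. ln (1 - u * 1))"
    by (intro ln_cont continuous_intros; simp)+
  then show ?thesis
    unfolding ln_factor_ratio_def[abs_def]
    by (intro continuous_on_diff continuous_on_add continuous_on_mult continuous_on_const) simp_all
qed

lemma norm_ln_series_term_le:
  fixes u :: complex
  shows "norm (2 * u ^ k / of_nat k * (1 - of_real (cos x))) \<le> 4 * norm u ^ k"
proof -
  have "norm (2 * u ^ k / of_nat k) \<le> 2 * norm u ^ k"
  proof (cases "k = 0")
    case False
    then have "2 * norm u ^ k / real k \<le> 2 * norm u ^ k / 1"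
      by (intro divide_left_mono) auto
    then show ?thesis
      by (simp add: norm_mult norm_divide norm_power)
  qed simp
  moreover have "norm (1 - (of_real (cos x) :: complex)) \<le> 2"
  proof -
    have "norm (1 - (of_real (cos x) :: complex)) = \<bar>1 - cos x\<bar>"
      by (metis norm_of_real of_real_1 of_real_diff)
    then show ?thesis
      using abs_cos_le_one[of x] unfolding abs_le_iff by linarith
  qed
  ultimately have "norm (2 * u ^ k / of_nat k) * norm (1 - (of_real (cos x) :: complex)) \<le> (2 * norm u ^ k) * 2"
    by (intro mult_mono) auto
  then show ?thesis
    unfolding norm_mult by simp
qed

lemma has_integral_cos_mult_ln_factor_ratio:
  assumes u: "norm u < 1" and n: "n \<noteq> 0"
  shows "((\<lambda>t. of_real (cos (2 * real n * t)) * ln_factor_ratio u t) has_integral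
           (- of_real pi * u ^ n / of_nat n)) {0..pi}"
proof -
  define g where "g k t = 2 * u ^ k / of_nat k * (1 - of_real (cos (2 * real k * t)))" for k t
  define h where "h k t = of_real (cos (2 * real n * t)) * g k t" for k t
  define I where "I k = 2 * u ^ k / of_nat k * (0 - (if k = n then of_real pi / 2 else 0))" for k
  have norm_g: "norm (g k t) \<le> 4 * norm u ^ k" for k t
    unfolding g_def by (rule norm_ln_series_term_le)
  have norm_h: "norm (h k t) \<le> 4 * norm u ^ k" for k t
    using mult_mono[OF abs_cos_le_one[of "2 * real n * t"] norm_g[of k t]]
    by (simp add: h_def norm_mult)
  have summable: "summable (\<lambda>k. 4 * norm u ^ k)"
    using u by (intro summable_mult summable_geometric) simp
  have cont: "continuous_on {0..pi} (h k)" for k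
    unfolding h_def g_def by (intro continuous_intros)
  have int: "(h k has_integral I k) {0..pi}" for k
  proof -
    have "h k = (\<lambda>t. 2 * u ^ k / of_nat k * (of_real (cos (2 * real n * t))
        - of_real (cos (2 * real n * t)) * of_real (cos (2 * real k * t))))"
      by (rule ext) (simp add: h_def g_def algebra_simps)
    then show ?thesis
      unfolding I_def
      by (simp only:) (intro has_integral_mult_right has_integral_diff has_integral_cos has_integral_cos_mult_cos n)
  qed
  have "((\<lambda>t. \<Sum>k. h k t) has_integral (\<Sum>k. I k)) {0..pi}"
    by (rule has_integral_suminf(2)[OF cont norm_h summable int])
  moreover have "(\<Sum>k. h k t) = of_real (cos (2 * real n * t)) * ln_factor_ratio u t" for t
    unfolding h_def using sums_mult[OF ln_factor_ratio_sums[OF u]] by (simp add: g_def sums_iff)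
  moreover have "I sums (- of_real pi * u ^ n / of_nat n)"
  proof -
    have "I = (\<lambda>k. if k = n then - of_real pi * u ^ n / of_nat n else 0)"
      by (rule ext) (simp add: I_def)
    then show ?thesis
      using sums_single[of n "\<lambda>_. - of_real pi * u ^ n / of_nat n"] by simp
  qed
  ultimately show ?thesis
    by (simp add: sums_iff)
qed

lemma has_integral_powser_cis:
  fixes c :: "nat \<Rightarrow> complex"
  assumes summable: "summable (\<lambda>j. norm (c j * \<rho> ^ j))"
  shows "((\<lambda>t. (\<Sum>j. c j * (\<rho> * cis (2 * t)) ^ j) * cis (2 * t) powi (- p)) has_integral
           (if 0 \<le> p then of_real pi * c (nat p) * \<rho> ^ nat p else 0)) {0..pi}"
proof -
  define h where "h j t = c j * \<rho> ^ j * cis (2 * t) powi (int j - p)" for j t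
  define I where "I j = c j * \<rho> ^ j * (if int j - p = 0 then of_real pi else 0)" for j
  have h_eq: "c j * (\<rho> * cis (2 * t)) ^ j * cis (2 * t) powi (- p) = h j t" for j t
    using power_int_add[of "cis (2 * t)" "int j" "- p"] by (simp add: h_def power_mult_distrib mult_ac)
  have "summable (\<lambda>j. c j * (\<rho> * cis (2 * t)) ^ j)" for t
    using summable by (intro summable_norm_cancel[of "\<lambda>j. c j * (\<rho> * cis (2 * t)) ^ j"])
      (simp only: norm_mult norm_power norm_cis power_one mult_1_right)
  then have expand: "(\<Sum>j. c j * (\<rho> * cis (2 * t)) ^ j) * cis (2 * t) powi (- p) = (\<Sum>j. h j t)" for t
    unfolding h_eq[symmetric] by (rule suminf_mult2)
  have cont: "continuous_on {0..pi} (h j)" for j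
    unfolding h_def by (intro continuous_intros) auto
  have norm_h: "norm (h j t) \<le> norm (c j * \<rho> ^ j)" for j t
    by (simp add: h_def norm_mult norm_power_int)
  have int: "(h j has_integral I j) {0..pi}" for j
    unfolding h_def I_def by (intro has_integral_mult_right has_integral_cis_power_int)
  have "((\<lambda>t. \<Sum>j. h j t) has_integral (\<Sum>j. I j)) {0..pi}"
    by (rule has_integral_suminf(2)[OF cont norm_h summable int])
  moreover have "(\<Sum>j. I j) = (if 0 \<le> p then of_real pi * c (nat p) * \<rho> ^ nat p else 0)"
  proof (cases "0 \<le> p")
    case True
    then have "I = (\<lambda>j. if j = nat p then of_real pi * c (nat p) * \<rho> ^ nat p else 0)"
      by (auto simp: I_def fun_eq_iff)
    then show ?thesis
      using True sums_unique[OF sums_single[of "nat p" "\<lambda>_. of_real pi * c (nat p) * \<rho> ^ nat p"]] by simp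
  next
    case False
    then have "I = (\<lambda>_. 0)"
      by (auto simp: I_def fun_eq_iff)
    then show ?thesis
      using False by simp
  qed
  ultimately show ?thesis
    by (simp add: expand)
qed

lemma has_sum_mult_pairs:
  fixes f g :: "nat \<Rightarrow> 'a::{real_normed_div_algebra, banach}"
  assumes f: "summable (\<lambda>k. norm (f k))" and g: "summable (\<lambda>j. norm (g j))"
  shows "((\<lambda>(k, j). f k * g j) has_sum (suminf f * suminf g)) (UNIV \<times> UNIV)"
proof -
  have row: "((\<lambda>j. f k * g j) has_sum (f k * suminf g)) UNIV" for k
    using g summable_norm_cancel[OF g] by (intro norm_summable_imp_has_sum)
      (simp_all add: norm_mult summable_mult sums_mult summable_sums)
  have col: "((\<lambda>k. f k * suminf g) has_sum (suminf f * suminf g)) UNIV"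
    using f summable_norm_cancel[OF f] by (intro norm_summable_imp_has_sum)
      (simp_all add: norm_mult summable_mult2 sums_mult2 summable_sums)
  have row_norm: "((\<lambda>j. norm (f k * g j)) has_sum (norm (f k) * (\<Sum>j. norm (g j)))) UNIV" for k
    using g by (intro norm_summable_imp_has_sum) (auto simp: norm_mult summable_mult sums_mult summable_sums)
  have row_summable: "(\<lambda>j. norm (f k * g j)) summable_on UNIV" for k
    using row_norm by (auto simp: summable_on_def)
  have "(\<lambda>k. norm (f k) * (\<Sum>j. norm (g j))) summable_on UNIV"
    using f by (intro norm_summable_imp_summable_on) (simp add: abs_mult summable_mult2)
  then have "(\<lambda>k. norm (\<Sum>\<^sub>\<infinity>j. norm (f k * g j))) summable_on UNIV"
    using suminf_nonneg[OF g norm_ge_zero] by (simp add: infsumI[OF row_norm] abs_mult)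
  then have "(\<lambda>x. norm ((\<lambda>(k, j). f k * g j) x)) summable_on UNIV \<times> UNIV"
    using Infinite_Sum.abs_summable_on_Sigma_iff[where f="\<lambda>(k, j). f k * g j" and A=UNIV and B="\<lambda>_. UNIV"]
      row_summable by auto
  then have "(\<lambda>(k, j). f k * g j) summable_on UNIV \<times> UNIV"
    by (rule abs_summable_summable)
  from has_sum_SigmaI[OF _ col this] show ?thesis
    by (simp add: row)
qed

lemma continuous_exp_eq_imp_eq:
  fixes f g :: "'a::topological_space \<Rightarrow> complex"
  assumes S: "connected S" and f: "continuous_on S f" and g: "continuous_on S g"
    and exp_eq: "\<And>x. x \<in> S \<Longrightarrow> exp (f x) = exp (g x)" and a: "a \<in> S" "f a = g a"
    and x: "x \<in> S"
  shows "f x = g x"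
proof -
  have "(\<lambda>x. f x - g x) constant_on S"
  proof (rule continuous_discrete_range_constant[OF S])
    show "continuous_on S (\<lambda>x. f x - g x)"
      by (intro continuous_intros f g)
    fix x assume x: "x \<in> S"
    show "\<exists>e>0. \<forall>y. y \<in> S \<and> f y - g y \<noteq> f x - g x \<longrightarrow> e \<le> norm (f y - g y - (f x - g x))"
    proof (intro exI[of _ "2 * pi"] conjI allI impI)
      fix y assume y: "y \<in> S \<and> f y - g y \<noteq> f x - g x"
      define d where "d = f y - g y - (f x - g x)"
      have "exp d = 1"
        using exp_eq[OF x] exp_eq[of y] y by (simp add: d_def exp_diff)
      then obtain n where re: "Re d = 0" and im: "Im d = real_of_int (2 * n) * pi"
        unfolding exp_eq_1 by blast
      have "n \<noteq> 0"
        using re im y by (auto simp: d_def complex_eq_iff)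
      then have "2 * pi \<le> \<bar>real_of_int (2 * n) * pi\<bar>"
        by (auto simp: abs_mult)
      also have "\<dots> \<le> norm d"
        using abs_Im_le_cmod[of d] im by simp
      finally show "2 * pi \<le> norm (f y - g y - (f x - g x))"
        by (simp add: d_def)
    qed simp
  qed
  then obtain c where c: "\<And>y. y \<in> S \<Longrightarrow> f y - g y = c"
    unfolding constant_on_def by blast
  have "f x - g x = f a - g a"
    using c[OF x] c[OF a(1)] by simp
  then show ?thesis
    using a(2) by simp
qed

lemma has_sum_int_split:
  fixes f :: "int \<Rightarrow> 'a::banach"
  assumes "summable (\<lambda>m. norm (f (int (Suc m))))" "(\<lambda>m. f (int (Suc m))) sums A"
    and "summable (\<lambda>m. norm (f (- int (Suc m))))" "(\<lambda>m. f (- int (Suc m))) sums B"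
  shows "(f has_sum (A + B)) (UNIV - {0})"
proof -
  have bij_pos: "bij_betw (\<lambda>m. int (Suc m)) UNIV {0<..}"
    by (rule bij_betw_byWitness[where f'="\<lambda>n. nat n - 1"]) (auto simp: image_def intro!: exI[of _ "nat _ - 1"])
  have bij_neg: "bij_betw (\<lambda>m. - int (Suc m)) UNIV {..<0}"
    by (rule bij_betw_byWitness[where f'="\<lambda>n. nat (-n) - 1"]) (auto simp: image_def intro!: exI[of _ "nat (-_) - 1"])
  have pos: "(f has_sum A) {0<..}"
    using norm_summable_imp_has_sum[OF assms(1,2)] has_sum_reindex_bij_betw[OF bij_pos, of f A] by simp
  have neg: "(f has_sum B) {..<0}"
    using norm_summable_imp_has_sum[OF assms(3,4)] has_sum_reindex_bij_betw[OF bij_neg, of f B] by simp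
  have "(f has_sum (A + B)) ({0<..} \<union> {..<0})"
    by (rule has_sum_Un_disjoint[OF pos neg]) auto
  moreover have "{0<..} \<union> {..<0} = UNIV - {0::int}"
    by auto
  ultimately show ?thesis
    by simp
qed

lemma summable_gaussian:
  fixes s a c :: real
  assumes s: "s > 0" and a: "a > 0"
  shows "summable (\<lambda>n. real n * exp (- (s * (a * real n ^ 2 + c * real n))))"
proof (rule summable_comparison_test_ev)
  have "((\<lambda>n. real n * exp (- (s * (a * real n ^ 2 + c * real n))) * 2 ^ n) \<longlongrightarrow> 0) sequentially"
    using s a by real_asymp
  then have "eventually (\<lambda>n. real n * exp (- (s * (a * real n ^ 2 + c * real n))) * 2 ^ n < 1) sequentially"
    by (rule order_tendstoD) simp
  then show "eventually (\<lambda>n. norm (real n * exp (- (s * (a * real n ^ 2 + c * real n)))) \<le> (1 / 2) ^ n) sequentially"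
    by eventually_elim (simp add: field_simps power_divide)
qed (simp add: summable_geometric)

lemma summable_norm_cos_series:
  fixes V :: "nat \<Rightarrow> complex"
  assumes "summable (\<lambda>m. real (Suc m) * norm (V m))"
  shows "summable (\<lambda>m. norm ((-1) ^ Suc m * of_nat (Suc m) * V m * of_real (cos (2 * real (Suc m) * t))))"
  by (rule summable_comparison_test'[OF assms])
    (simp add: norm_mult norm_power mult_left_le abs_cos_le_one del: of_nat_Suc)

locale nome =
  fixes q :: complex
  assumes norm_q_less_1: "norm q < 1" and q_nonzero: "q \<noteq> 0"
begin

lemma norm_power_q_le: "n > 0 \<Longrightarrow> norm q ^ n \<le> norm q"
  using power_decreasing[of 1 n "norm q"] norm_q_less_1 by simp

lemma norm_one_minus_power_q_ge:
  assumes "n > 0"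
  shows "1 - norm q \<le> norm (1 - q ^ n)"
proof -
  have "1 - norm (q ^ n) \<le> norm (1 - q ^ n)"
    by (metis norm_one norm_triangle_ineq2)
  then show ?thesis
    using norm_power_q_le[OF assms] by (simp add: norm_power)
qed

lemma one_minus_power_q_nonzero: "n > 0 \<Longrightarrow> 1 - q ^ n \<noteq> 0"
  using norm_one_minus_power_q_ge[of n] norm_q_less_1 by auto

lemma norm_odd_factor_less_1:
  assumes "norm y \<le> 1"
  shows "norm (q ^ (2 * j + 1) * y) < 1"
proof -
  have "norm (q ^ (2 * j + 1) * y) \<le> norm q ^ (2 * j + 1)"
    using assms by (simp add: norm_mult norm_power mult_left_le)
  also have "\<dots> \<le> norm q"
    by (rule norm_power_q_le) simp
  finally show ?thesis
    using norm_q_less_1 by linarith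
qed

lemma norm_odd_power_q_less_1: "norm (q ^ (2 * j + 1)) < 1"
  using norm_odd_factor_less_1[of 1 j] by simp

(* Taylor coefficients of odd_prod y, the product of 1 - q^(2j+1) y over j >= 0; the recursion is
   forced by the functional equation odd_prod y = (1 - q y) odd_prod (q^2 y). *)
fun prod_coeff :: "nat \<Rightarrow> complex" where
  "prod_coeff 0 = 1"
| "prod_coeff (Suc j) = - (q ^ (2 * j + 1) * prod_coeff j) / (1 - q ^ (2 * j + 2))"

lemma prod_coeff_Suc_mult: "prod_coeff (Suc j) * (1 - q ^ (2 * j + 2)) = - (q ^ (2 * j + 1)) * prod_coeff j"
  using one_minus_power_q_nonzero[of "2 * j + 2"] by simp

lemma summable_norm_prod_coeff: "summable (\<lambda>j. norm (prod_coeff j * y ^ j))"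
proof -
  have "(\<lambda>n. norm q ^ n * norm y) \<longlonglongrightarrow> 0 * norm y"
    using norm_q_less_1 by (intro tendsto_mult tendsto_const LIMSEQ_power_zero) auto
  then have "eventually (\<lambda>n. norm q ^ n * norm y < (1 - norm q) / 2) sequentially"
    using norm_q_less_1 by (intro order_tendstoD(2)) auto
  then obtain N where N: "\<And>n. n \<ge> N \<Longrightarrow> norm q ^ n * norm y < (1 - norm q) / 2"
    by (auto simp: eventually_sequentially)
  show ?thesis
  proof (rule summable_ratio_test[where c="1/2" and N=N])
    fix n assume n: "N \<le> n"
    have gap: "1 - norm q \<le> norm (1 - q ^ (2 * n + 2))"
      by (rule norm_one_minus_power_q_ge) simp
    have pos: "0 < 1 - norm q"
      using norm_q_less_1 by simp
    have "norm (prod_coeff (Suc n) * y ^ Suc n)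
        = norm q ^ (2 * n + 1) * norm y / norm (1 - q ^ (2 * n + 2)) * norm (prod_coeff n * y ^ n)"
      by (simp add: norm_mult norm_divide norm_power field_simps)
    also have "\<dots> \<le> ((1 - norm q) / 2) / (1 - norm q) * norm (prod_coeff n * y ^ n)"
    proof (intro mult_right_mono frac_le)
      show "norm q ^ (2 * n + 1) * norm y \<le> (1 - norm q) / 2"
        using N[of "2 * n + 1"] n by linarith
    qed (use gap pos in auto)
    also have "\<dots> = 1 / 2 * norm (norm (prod_coeff n * y ^ n))"
      using pos by (simp add: field_simps)
    finally show "norm (norm (prod_coeff (Suc n) * y ^ Suc n)) \<le> 1 / 2 * norm (norm (prod_coeff n * y ^ n))"
      by simp
  qed simp
qed

definition odd_prod :: "complex \<Rightarrow> complex" where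
  "odd_prod y = (\<Sum>j. prod_coeff j * y ^ j)"

lemma summable_odd_prod: "summable (\<lambda>j. prod_coeff j * y ^ j)"
  by (rule summable_norm_cancel[OF summable_norm_prod_coeff])

lemma odd_prod_functional_eq: "odd_prod y = (1 - q * y) * odd_prod (q\<^sup>2 * y)"
proof -
  define g where "g j = prod_coeff j * (q\<^sup>2 * y) ^ j" for j
  define h where "h j = (if j = 0 then 0 else q * y * g (j - 1))" for j
  have g: "g sums odd_prod (q\<^sup>2 * y)"
    unfolding g_def odd_prod_def by (rule summable_sums[OF summable_odd_prod])
  have "(\<lambda>j. h (Suc j)) sums (q * y * odd_prod (q\<^sup>2 * y))"
    unfolding h_def using sums_mult[OF g, of "q * y"] by simp
  then have h: "h sums (q * y * odd_prod (q\<^sup>2 * y))"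
    using sums_Suc_iff[of h] by (simp add: h_def)
  have "g j - h j = prod_coeff j * y ^ j" for j
  proof (cases j)
    case (Suc i)
    have p1: "(q\<^sup>2 * y) ^ Suc i = q ^ (2 * i + 2) * y ^ Suc i"
      by (simp only: power_mult_distrib power_mult[symmetric]) (simp add: mult_2_right)
    have p2: "q * y * (q\<^sup>2 * y) ^ i = q ^ (2 * i + 1) * y ^ Suc i"
      by (simp add: power_mult_distrib power_mult[symmetric])
    have "prod_coeff (Suc i) * y ^ Suc i
        - (prod_coeff (Suc i) * (q\<^sup>2 * y) ^ Suc i - q * y * (prod_coeff i * (q\<^sup>2 * y) ^ i))
        = (prod_coeff (Suc i) * (1 - q ^ (2 * i + 2)) + q ^ (2 * i + 1) * prod_coeff i) * y ^ Suc i"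
      unfolding p1 using p2 by (auto simp add: algebra_simps simp del: prod_coeff.simps)
    also have "\<dots> = 0"
      by (simp only: prod_coeff_Suc_mult) simp
    finally show ?thesis
      using Suc by (simp add: g_def h_def)
  qed (simp add: g_def h_def)
  then have "(\<lambda>j. prod_coeff j * y ^ j) sums (odd_prod (q\<^sup>2 * y) - q * y * odd_prod (q\<^sup>2 * y))"
    using sums_diff[OF g h] by simp
  then show ?thesis
    unfolding odd_prod_def by (simp add: sums_iff algebra_simps)
qed

lemma odd_prod_eq_partial_prod: "odd_prod y = (\<Prod>j<N. 1 - q ^ (2 * j + 1) * y) * odd_prod (q ^ (2 * N) * y)"
proof (induction N)
  case (Suc N)
  have "odd_prod (q ^ (2 * N) * y) = (1 - q ^ (2 * N + 1) * y) * odd_prod (q ^ (2 * Suc N) * y)"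
    using odd_prod_functional_eq[of "q ^ (2 * N) * y"] by (simp add: power2_eq_square mult_ac)
  with Suc.IH show ?case
    by (simp add: mult_ac)
qed simp

lemma isCont_odd_prod: "isCont odd_prod y"
  unfolding odd_prod_def[abs_def] by (rule isCont_powser_converges_everywhere) (rule summable_odd_prod)

lemma continuous_on_odd_prod [continuous_intros]:
  "continuous_on A f \<Longrightarrow> continuous_on A (\<lambda>t. odd_prod (f t))"
  using continuous_on_compose2[of UNIV odd_prod A f] isCont_odd_prod
  by (simp add: continuous_at_imp_continuous_on)

lemma odd_prod_0 [simp]: "odd_prod 0 = 1"
  unfolding odd_prod_def using powser_zero[of prod_coeff] by simp

lemma norm_odd_prod_le: "norm (odd_prod y) \<le> (\<Sum>j. norm (prod_coeff j * y ^ j))"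
  unfolding odd_prod_def by (rule summable_norm[OF summable_norm_prod_coeff])

lemma tendsto_odd_prod_1: "(\<lambda>N. odd_prod (q ^ (2 * N) * y)) \<longlonglongrightarrow> 1"
proof -
  have "(\<lambda>N. (q\<^sup>2) ^ N) \<longlonglongrightarrow> 0"
    using norm_q_less_1 by (intro LIMSEQ_power_zero) (simp add: norm_power abs_square_less_1)
  then have "(\<lambda>N. q ^ (2 * N) * y) \<longlonglongrightarrow> 0"
    using tendsto_mult_left_zero by (simp add: power_mult)
  from isCont_tendsto_compose[OF isCont_odd_prod this] show ?thesis
    by simp
qed

definition log_odd_prod :: "complex \<Rightarrow> complex" where
  "log_odd_prod y = (\<Sum>j. ln (1 - q ^ (2 * j + 1) * y))"

lemma norm_ln_odd_factor_le:
  assumes "norm y \<le> 1"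
  shows "norm (ln (1 - q ^ (2 * j + 1) * y)) \<le> norm q ^ (2 * j + 1) / (1 - norm q)"
proof -
  have "norm (ln (1 - q ^ (2 * j + 1) * y)) \<le> norm (q ^ (2 * j + 1) * y) / (1 - norm (q ^ (2 * j + 1) * y))"
    by (rule norm_ln_one_minus_le[OF norm_odd_factor_less_1[OF assms]])
  also have "\<dots> \<le> norm q ^ (2 * j + 1) / (1 - norm q)"
  proof -
    have "norm (q ^ (2 * j + 1) * y) \<le> norm q ^ (2 * j + 1)"
      using assms by (simp add: norm_mult norm_power mult_left_le)
    then show ?thesis
      using norm_power_q_le[of "2 * j + 1"] norm_q_less_1 by (intro frac_le) auto
  qed
  finally show ?thesis .
qed

lemma summable_odd_factor_bound: "summable (\<lambda>j. norm q ^ (2 * j + 1) / (1 - norm q))"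
proof -
  have "summable (\<lambda>j. norm q / (1 - norm q) * (norm q ^ 2) ^ j)"
    using norm_q_less_1 by (intro summable_mult summable_geometric) (simp add: abs_square_less_1)
  then show ?thesis
    by (simp add: power_mult[symmetric] mult.commute)
qed

lemma summable_log_odd_prod: "norm y \<le> 1 \<Longrightarrow> summable (\<lambda>j. ln (1 - q ^ (2 * j + 1) * y))"
  by (rule summable_norm_cancel, rule summable_comparison_test'[OF summable_odd_factor_bound])
    (use norm_ln_odd_factor_le in auto)

lemma odd_prod_eq_exp:
  assumes y: "norm y \<le> 1"
  shows "odd_prod y = exp (log_odd_prod y)"
proof -
  have "(\<lambda>N. \<Sum>j<N. ln (1 - q ^ (2 * j + 1) * y)) \<longlonglongrightarrow> log_odd_prod y"
    unfolding log_odd_prod_def by (rule summable_LIMSEQ[OF summable_log_odd_prod[OF y]])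
  then have "(\<lambda>N. exp (\<Sum>j<N. ln (1 - q ^ (2 * j + 1) * y))) \<longlonglongrightarrow> exp (log_odd_prod y)"
    by (rule tendsto_exp)
  moreover have "1 - q ^ (2 * j + 1) * y \<noteq> 0" for j
  proof
    assume "1 - q ^ (2 * j + 1) * y = 0"
    then show False
      using norm_odd_factor_less_1[OF y, of j] by simp
  qed
  then have "exp (\<Sum>j<N. ln (1 - q ^ (2 * j + 1) * y)) = (\<Prod>j<N. 1 - q ^ (2 * j + 1) * y)" for N
    unfolding exp_sum[OF finite_lessThan] by (intro prod.cong refl exp_Ln)
  ultimately have "(\<lambda>N. (\<Prod>j<N. 1 - q ^ (2 * j + 1) * y) * odd_prod (q ^ (2 * N) * y))
      \<longlonglongrightarrow> exp (log_odd_prod y) * 1"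
    by (intro tendsto_mult tendsto_odd_prod_1) simp
  then have "(\<lambda>N. odd_prod y) \<longlonglongrightarrow> exp (log_odd_prod y)"
    by (simp only: odd_prod_eq_partial_prod[symmetric] mult_1_right)
  then show ?thesis
    by (simp add: LIMSEQ_const_iff)
qed

definition triple_prod :: "complex \<Rightarrow> complex" where
  "triple_prod y = odd_prod y * odd_prod (inverse y)"

lemma triple_prod_functional_eq:
  assumes y: "y \<noteq> 0"
  shows "triple_prod y = - (q * y) * triple_prod (q\<^sup>2 * y)"
proof -
  have "q * inverse (q\<^sup>2 * y) = inverse (q * y)" "q\<^sup>2 * inverse (q\<^sup>2 * y) = inverse y"
    using q_nonzero y by (simp_all add: field_simps power2_eq_square)
  then have inv: "odd_prod (inverse (q\<^sup>2 * y)) = (1 - inverse (q * y)) * odd_prod (inverse y)"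
    using odd_prod_functional_eq[of "inverse (q\<^sup>2 * y)"] by (simp only:)
  have "- (q * y) * triple_prod (q\<^sup>2 * y)
      = (- (q * y) * (1 - inverse (q * y))) * odd_prod (q\<^sup>2 * y) * odd_prod (inverse y)"
    unfolding triple_prod_def inv by (simp only: mult_ac)
  also have "- (q * y) * (1 - inverse (q * y)) = 1 - q * y"
    using q_nonzero y by (simp add: field_simps)
  finally show ?thesis
    unfolding triple_prod_def by (simp only: odd_prod_functional_eq[of y, symmetric])
qed

lemma triple_prod_cis_eq_exp:
  "triple_prod (cis x) = exp (log_odd_prod (cis x) + log_odd_prod (cis (- x)))"
  unfolding triple_prod_def using odd_prod_eq_exp[of "cis x"] odd_prod_eq_exp[of "cis (- x)"]
  by (simp add: exp_add)

(* laurent_coeff m is the coefficient of y^m in triple_prod y = odd_prod y * odd_prod (1/y). *)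
definition laurent_term :: "int \<Rightarrow> nat \<Rightarrow> complex" where
  "laurent_term m k = (if 0 \<le> m + int k then prod_coeff (nat (m + int k)) * prod_coeff k else 0)"

definition laurent_coeff :: "int \<Rightarrow> complex" where
  "laurent_coeff m = (\<Sum>k. laurent_term m k)"

lemma summable_norm_laurent_term: "summable (\<lambda>k. norm (laurent_term m k))"
proof (rule summable_comparison_test')
  define C where "C = (\<Sum>j. norm (prod_coeff j))"
  have summable: "summable (\<lambda>j. norm (prod_coeff j))"
    using summable_norm_prod_coeff[of 1] by simp
  have C: "norm (prod_coeff j) \<le> C" for j
    unfolding C_def using sum_le_suminf[OF summable, of "{j}"] by simp
  then show "norm (norm (laurent_term m k)) \<le> C * norm (prod_coeff k)" for k
    using order_trans[OF norm_ge_zero C] unfolding laurent_term_def by (auto simp: norm_mult intro: mult_right_mono)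
  show "summable (\<lambda>k. C * norm (prod_coeff k))"
    by (intro summable_mult summable)
qed

lemma laurent_coeff_sums: "(\<lambda>k. laurent_term m k) sums laurent_coeff m"
  unfolding laurent_coeff_def by (rule summable_sums[OF summable_norm_cancel[OF summable_norm_laurent_term]])

lemma triple_prod_cis_expansion:
  "triple_prod (\<rho> * cis (2 * t)) * cis (2 * t) powi (- m)
    = (\<Sum>k. prod_coeff k * inverse \<rho> ^ k * (odd_prod (\<rho> * cis (2 * t)) * cis (2 * t) powi (- (m + int k))))"
proof -
  have "inverse (\<rho> * cis (2 * t)) ^ k * cis (2 * t) powi (- m)
      = inverse \<rho> ^ k * cis (2 * t) powi (- (m + int k))" for k
  proof -
    have "cis (2 * t) powi (- (m + int k)) = cis (2 * t) powi (- int k) * cis (2 * t) powi (- m)"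
      using power_int_add[of "cis (2 * t)" "- int k" "- m"] by (simp add: add_ac)
    then show ?thesis
      by (simp add: power_mult_distrib power_int_minus power_inverse del: cis_inverse)
  qed
  then have term_eq: "prod_coeff k * inverse (\<rho> * cis (2 * t)) ^ k
      * (odd_prod (\<rho> * cis (2 * t)) * cis (2 * t) powi (- m))
      = prod_coeff k * inverse \<rho> ^ k * (odd_prod (\<rho> * cis (2 * t)) * cis (2 * t) powi (- (m + int k)))" for k
    by (simp add: mult_ac)
  have "triple_prod (\<rho> * cis (2 * t)) * cis (2 * t) powi (- m)
      = (\<Sum>k. prod_coeff k * inverse (\<rho> * cis (2 * t)) ^ k) * (odd_prod (\<rho> * cis (2 * t)) * cis (2 * t) powi (- m))"
    unfolding triple_prod_def odd_prod_def[of "inverse _"] by (simp only: mult_ac)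
  also have "\<dots> = (\<Sum>k. prod_coeff k * inverse (\<rho> * cis (2 * t)) ^ k
      * (odd_prod (\<rho> * cis (2 * t)) * cis (2 * t) powi (- m)))"
    by (rule suminf_mult2[OF summable_odd_prod])
  finally show ?thesis
    by (simp only: term_eq)
qed

lemma has_integral_triple_prod_cis:
  assumes \<rho>: "\<rho> \<noteq> 0"
  shows "((\<lambda>t. triple_prod (\<rho> * cis (2 * t)) * cis (2 * t) powi (- m)) has_integral
           (of_real pi * \<rho> powi m * laurent_coeff m)) {0..pi}"
proof -
  define f where "f k t = prod_coeff k * inverse \<rho> ^ k * (odd_prod (\<rho> * cis (2 * t)) * cis (2 * t) powi (- (m + int k)))"
    for k t
  define B where "B = (\<Sum>j. norm (prod_coeff j * \<rho> ^ j))"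
  have expand: "triple_prod (\<rho> * cis (2 * t)) * cis (2 * t) powi (- m) = (\<Sum>k. f k t)" for t
    unfolding f_def by (rule triple_prod_cis_expansion)
  have cont: "continuous_on {0..pi} (f k)" for k
    unfolding f_def using \<rho> by (intro continuous_intros) auto
  have "norm (odd_prod (\<rho> * cis (2 * t))) \<le> B" for t
    using norm_odd_prod_le[of "\<rho> * cis (2 * t)"] by (simp add: B_def norm_mult norm_power power_mult_distrib)
  then have norm_f: "norm (f k t) \<le> norm (prod_coeff k * inverse \<rho> ^ k) * B" for k t
    unfolding f_def norm_mult[of "prod_coeff k * inverse \<rho> ^ k"]
    by (intro mult_left_mono) (simp_all add: norm_mult norm_power_int)
  have summable: "summable (\<lambda>k. norm (prod_coeff k * inverse \<rho> ^ k) * B)"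
    by (intro summable_mult2 summable_norm_prod_coeff)
  have int: "(f k has_integral (of_real pi * \<rho> powi m * laurent_term m k)) {0..pi}" for k
  proof -
    have "(f k has_integral prod_coeff k * inverse \<rho> ^ k
        * (if 0 \<le> m + int k then of_real pi * prod_coeff (nat (m + int k)) * \<rho> ^ nat (m + int k) else 0)) {0..pi}"
      unfolding f_def odd_prod_def
      by (intro has_integral_mult_right has_integral_powser_cis summable_norm_prod_coeff)
    moreover have "prod_coeff k * inverse \<rho> ^ k
        * (if 0 \<le> m + int k then of_real pi * prod_coeff (nat (m + int k)) * \<rho> ^ nat (m + int k) else 0)
        = of_real pi * \<rho> powi m * laurent_term m k"
    proof (cases "0 \<le> m + int k")
      case True
      have "inverse \<rho> ^ k * \<rho> ^ nat (m + int k) = \<rho> powi m"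
        using True \<rho> by (simp add: power_int_diff power_int_add power_inverse field_simps flip: power_int_of_nat)
      then have "prod_coeff k * inverse \<rho> ^ k * (of_real pi * prod_coeff (nat (m + int k)) * \<rho> ^ nat (m + int k))
          = of_real pi * \<rho> powi m * (prod_coeff (nat (m + int k)) * prod_coeff k)"
        by (metis mult.assoc mult.commute)
      then show ?thesis
        using True by (simp add: laurent_term_def)
    qed (simp add: laurent_term_def)
    ultimately show ?thesis
      by simp
  qed
  have "((\<lambda>t. \<Sum>k. f k t) has_integral (\<Sum>k. of_real pi * \<rho> powi m * laurent_term m k)) {0..pi}"
    by (rule has_integral_suminf(2)[OF cont norm_f summable int])
  moreover have "(\<Sum>k. of_real pi * \<rho> powi m * laurent_term m k) = of_real pi * \<rho> powi m * laurent_coeff m"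
    using sums_unique[OF sums_mult[OF laurent_coeff_sums]] by simp
  ultimately show ?thesis
    by (simp add: expand)
qed

(* Compare Fourier coefficients of both sides of triple_prod_functional_eq on the unit circle. *)
lemma laurent_coeff_rec: "laurent_coeff m = - (q * (q\<^sup>2) powi (m - 1)) * laurent_coeff (m - 1)"
proof -
  have "triple_prod (cis (2 * t)) * cis (2 * t) powi (- m)
      = - q * (triple_prod (q\<^sup>2 * cis (2 * t)) * cis (2 * t) powi (- (m - 1)))" for t
  proof -
    have "cis (2 * t) powi (- (m - 1)) = cis (2 * t) * cis (2 * t) powi (- m)"
      using power_int_add_1'[of "cis (2 * t)" "- m"] by simp
    then show ?thesis
      using triple_prod_functional_eq[of "cis (2 * t)"] by (simp add: mult_ac)
  qed
  then have "((\<lambda>t. triple_prod (cis (2 * t)) * cis (2 * t) powi (- m)) has_integral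
      - q * (of_real pi * (q\<^sup>2) powi (m - 1) * laurent_coeff (m - 1))) {0..pi}"
    using has_integral_mult_right[OF has_integral_triple_prod_cis[of "q\<^sup>2" "m - 1"], of "- q"] q_nonzero
    by simp
  moreover have "((\<lambda>t. triple_prod (cis (2 * t)) * cis (2 * t) powi (- m)) has_integral
      of_real pi * laurent_coeff m) {0..pi}"
    using has_integral_triple_prod_cis[of 1 m] by simp
  ultimately have "of_real pi * laurent_coeff m = - q * (of_real pi * (q\<^sup>2) powi (m - 1) * laurent_coeff (m - 1))"
    using has_integral_unique by blast
  then have "of_real pi * (laurent_coeff m - (- (q * (q\<^sup>2) powi (m - 1)) * laurent_coeff (m - 1))) = 0"
    by (simp add: algebra_simps)
  then show ?thesis
    by (simp add: eq_neg_iff_add_eq_0)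
qed

lemma laurent_coeff_eq: "laurent_coeff m = (-1) powi m * q powi (m\<^sup>2) * laurent_coeff 0"
proof -
  have step: "- (q * (q\<^sup>2) powi n) * ((-1) powi n * q powi (n\<^sup>2)) = (-1) powi (n + 1) * q powi ((n + 1)\<^sup>2)"
    for n :: int
  proof -
    have "q powi ((n + 1)\<^sup>2) = q powi (n\<^sup>2) * (q\<^sup>2) powi n * q"
      using q_nonzero by (simp add: power2_eq_square algebra_simps power_int_add power_int_mult power_int_mult_distrib)
    moreover have "(-1 :: complex) powi (n + 1) = (-1) powi n * (-1)"
      by (rule power_int_add_1) simp
    ultimately show ?thesis
      by (simp add: mult_ac)
  qed
  show ?thesis
  proof (induction m rule: int_induct[where k = 0])
    case (step1 i)
    have "laurent_coeff (i + 1) = - (q * (q\<^sup>2) powi i) * laurent_coeff i"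
      using laurent_coeff_rec[of "i + 1"] by simp
    also have "\<dots> = (- (q * (q\<^sup>2) powi i) * ((-1) powi i * q powi (i\<^sup>2))) * laurent_coeff 0"
      using step1 by (simp add: mult_ac)
    also have "\<dots> = (-1) powi (i + 1) * q powi ((i + 1)\<^sup>2) * laurent_coeff 0"
      by (simp only: step)
    finally show ?case .
  next
    case (step2 i)
    have "- (q * (q\<^sup>2) powi (i - 1)) * laurent_coeff (i - 1) = laurent_coeff i"
      using laurent_coeff_rec[of i] by simp
    also have "\<dots> = (-1) powi i * q powi (i\<^sup>2) * laurent_coeff 0"
      by (rule step2)
    also have "\<dots> = - (q * (q\<^sup>2) powi (i - 1)) * ((-1) powi (i - 1) * q powi ((i - 1)\<^sup>2) * laurent_coeff 0)"
      using step[of "i - 1"] by (simp add: mult_ac)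
    finally show ?case
      using q_nonzero by simp
  qed simp
qed

lemma has_sum_triple_prod:
  assumes y: "y \<noteq> 0"
  shows "((\<lambda>n. laurent_coeff n * y powi n) has_sum triple_prod y) UNIV"
proof -
  define T where "T = (\<lambda>(k, j). prod_coeff k * inverse y ^ k * (prod_coeff j * y ^ j))"
  define W where "W = (\<lambda>(n, k). laurent_term n k * y powi n)"
  define D where "D = {(n :: int, k :: nat). 0 \<le> n + int k}"
  have "(T has_sum (odd_prod (inverse y) * odd_prod y)) (UNIV \<times> UNIV)"
    unfolding T_def odd_prod_def by (rule has_sum_mult_pairs[OF summable_norm_prod_coeff summable_norm_prod_coeff])
  then have "(T has_sum triple_prod y) (UNIV \<times> UNIV)"
    by (simp add: triple_prod_def mult.commute)
  also have "(T has_sum triple_prod y) (UNIV \<times> UNIV) = (W has_sum triple_prod y) D"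
  proof (rule has_sum_reindex_bij_witness[where j="\<lambda>(k, j). (int j - int k, k)" and i="\<lambda>(n, k). (k, nat (n + int k))"])
    fix a :: "nat \<times> nat"
    obtain k j where a: "a = (k, j)"
      by (cases a)
    have "y powi (int j - int k) = y ^ j * inverse y ^ k"
      using y by (simp add: power_int_diff field_simps)
    then show "W (case a of (k, j) \<Rightarrow> (int j - int k, k)) = T a"
      by (simp add: a W_def T_def laurent_term_def mult_ac)
  qed (auto simp: D_def)
  also have "(W has_sum triple_prod y) D = (W has_sum triple_prod y) (UNIV \<times> UNIV)"
    by (rule has_sum_cong_neutral) (auto simp: D_def W_def laurent_term_def)
  finally have "(W has_sum triple_prod y) (UNIV \<times> UNIV)" .
  moreover have "((\<lambda>k. W (n, k)) has_sum (laurent_coeff n * y powi n)) UNIV" for n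
    unfolding W_def using has_sum_cmult_left[OF norm_summable_imp_has_sum[OF summable_norm_laurent_term laurent_coeff_sums]]
    by simp
  ultimately show ?thesis
    by (rule has_sum_Sigma'[where B="\<lambda>_. UNIV", simplified])
qed

lemma laurent_coeff_0_nonzero: "laurent_coeff 0 \<noteq> 0"
proof
  assume c0: "laurent_coeff 0 = 0"
  have "laurent_coeff n * 1 powi n = 0" for n
    using c0 laurent_coeff_eq[of n] by simp
  then have "((\<lambda>n::int. 0) has_sum triple_prod 1) UNIV"
    using has_sum_triple_prod[of 1] by simp
  then have "triple_prod 1 = 0"
    using has_sum_0[of UNIV "\<lambda>n::int. 0 :: complex"] has_sum_unique by blast
  then show False
    using triple_prod_cis_eq_exp[of 0] by simp
qed

lemma has_sum_theta_series:
  "((\<lambda>n. (-1) powi n * q powi (n\<^sup>2) * cis (2 * t) powi n) has_sum (triple_prod (cis (2 * t)) / laurent_coeff 0)) UNIV"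
proof -
  have "(\<lambda>n. laurent_coeff n * cis (2 * t) powi n)
      = (\<lambda>n. laurent_coeff 0 * ((-1) powi n * q powi (n\<^sup>2) * cis (2 * t) powi n))"
    by (rule ext, subst laurent_coeff_eq) (simp only: mult_ac)
  then have "((\<lambda>n. laurent_coeff 0 * ((-1) powi n * q powi (n\<^sup>2) * cis (2 * t) powi n))
      has_sum triple_prod (cis (2 * t))) UNIV"
    using has_sum_triple_prod[of "cis (2 * t)"] by simp
  then show ?thesis
    by (simp only: has_sum_cmult_right_iff[OF laurent_coeff_0_nonzero])
qed

definition log_theta_ratio :: "real \<Rightarrow> complex" where
  "log_theta_ratio t = (\<Sum>j. ln_factor_ratio (q ^ (2 * j + 1)) t)"

lemma norm_ln_factor_ratio_q_le:
  "norm (ln_factor_ratio (q ^ (2 * j + 1)) t) \<le> 4 * (norm q ^ (2 * j + 1) / (1 - norm q))"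
proof -
  have u: "norm (q ^ (2 * j + 1)) \<le> norm q"
    unfolding norm_power by (rule norm_power_q_le) simp
  have "norm (ln_factor_ratio (q ^ (2 * j + 1)) t) \<le> 4 * (norm (q ^ (2 * j + 1)) / (1 - norm (q ^ (2 * j + 1))))"
    by (rule norm_ln_factor_ratio_le[OF norm_odd_power_q_less_1])
  also have "\<dots> \<le> 4 * (norm q ^ (2 * j + 1) / (1 - norm q))"
    using u norm_q_less_1 by (intro mult_left_mono frac_le) (auto simp: norm_power norm_mult)
  finally show ?thesis .
qed

lemma summable_ln_factor_ratio_q: "summable (\<lambda>j. ln_factor_ratio (q ^ (2 * j + 1)) t)"
  by (rule summable_norm_cancel, rule summable_comparison_test'[OF summable_mult[OF summable_odd_factor_bound, of 4]])
    (use norm_ln_factor_ratio_q_le in simp)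

lemma continuous_on_log_theta_ratio: "continuous_on A log_theta_ratio"
proof (rule uniform_limit_theorem)
  show "uniform_limit A (\<lambda>N t. \<Sum>j<N. ln_factor_ratio (q ^ (2 * j + 1)) t) log_theta_ratio sequentially"
    unfolding log_theta_ratio_def[abs_def]
    by (rule Weierstrass_m_test[OF _ summable_mult[OF summable_odd_factor_bound, of 4]]) (rule norm_ln_factor_ratio_q_le)
  show "\<forall>\<^sub>F N in sequentially. continuous_on A (\<lambda>t. \<Sum>j<N. ln_factor_ratio (q ^ (2 * j + 1)) t)"
    using norm_odd_power_q_less_1
    by (intro always_eventually allI continuous_on_sum continuous_on_ln_factor_ratio) auto
qed simp

lemma log_theta_ratio_0 [simp]: "log_theta_ratio 0 = 0"
  by (simp add: log_theta_ratio_def ln_factor_ratio_def)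

lemma exp_log_theta_ratio: "exp (log_theta_ratio t) = triple_prod (cis (2 * t)) / triple_prod 1"
proof -
  have sums: "(\<lambda>j. ln (1 - q ^ (2 * j + 1) * y)) sums log_odd_prod y" if "norm y \<le> 1" for y
    unfolding log_odd_prod_def using summable_log_odd_prod[OF that] by (rule summable_sums)
  have "(\<lambda>j. ln (1 - q ^ (2 * j + 1))) sums log_odd_prod 1"
    using sums[of 1] by simp
  from sums_diff[OF sums_add[OF sums[of "cis (2 * t)"] sums[of "cis (- (2 * t))"]] sums_mult[OF this, of 2]]
  have "(\<lambda>j. ln_factor_ratio (q ^ (2 * j + 1)) t) sums
      (log_odd_prod (cis (2 * t)) + log_odd_prod (cis (- (2 * t))) - 2 * log_odd_prod 1)"
    by (simp add: ln_factor_ratio_def)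
  then have "log_theta_ratio t
      = log_odd_prod (cis (2 * t)) + log_odd_prod (cis (- (2 * t))) - 2 * log_odd_prod 1"
    by (simp add: log_theta_ratio_def sums_iff)
  then have "exp (log_theta_ratio t)
      = exp (log_odd_prod (cis (2 * t)) + log_odd_prod (cis (- (2 * t)))) / exp (log_odd_prod 1 + log_odd_prod 1)"
    by (simp only: exp_diff mult_2)
  also have "\<dots> = triple_prod (cis (2 * t)) / triple_prod 1"
    using triple_prod_cis_eq_exp[of "2 * t"] triple_prod_cis_eq_exp[of 0] by simp
  finally show ?thesis .
qed

lemma has_integral_cos_mult_log_theta_ratio:
  assumes n: "n \<noteq> 0"
  shows "((\<lambda>t. of_real (cos (2 * real n * t)) * log_theta_ratio t) has_integral
           (- of_real pi * q ^ n / (of_nat n * (1 - q ^ (2 * n))))) {0..pi}"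
proof -
  define f where "f j t = of_real (cos (2 * real n * t)) * ln_factor_ratio (q ^ (2 * j + 1)) t" for j t
  have cont: "continuous_on {0..pi} (f j)" for j
    unfolding f_def using norm_odd_power_q_less_1 by (intro continuous_intros continuous_on_ln_factor_ratio)
  have norm_f: "norm (f j t) \<le> 4 * (norm q ^ (2 * j + 1) / (1 - norm q))" for j t
    using mult_mono[OF abs_cos_le_one[of "2 * real n * t"] norm_ln_factor_ratio_q_le[of j t]]
    by (simp add: f_def norm_mult)
  have int: "(f j has_integral (- of_real pi * (q ^ (2 * j + 1)) ^ n / of_nat n)) {0..pi}" for j
    unfolding f_def by (rule has_integral_cos_mult_ln_factor_ratio[OF norm_odd_power_q_less_1 n])
  have "((\<lambda>t. \<Sum>j. f j t) has_integral (\<Sum>j. - of_real pi * (q ^ (2 * j + 1)) ^ n / of_nat n)) {0..pi}"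
    by (rule has_integral_suminf(2)[OF cont norm_f summable_mult[OF summable_odd_factor_bound, of 4] int])
  moreover have "(\<Sum>j. f j t) = of_real (cos (2 * real n * t)) * log_theta_ratio t" for t
    unfolding f_def log_theta_ratio_def by (rule suminf_mult[OF summable_ln_factor_ratio_q])
  moreover have "(\<lambda>j. - of_real pi * (q ^ (2 * j + 1)) ^ n / of_nat n)
      sums (- of_real pi * q ^ n / (of_nat n * (1 - q ^ (2 * n))))"
  proof -
    have "norm (q ^ (2 * n)) < 1"
      using norm_q_less_1 n by (simp add: norm_power power_less_one_iff)
    from sums_mult[OF geometric_sums[OF this], of "- of_real pi * q ^ n / of_nat n"]
    show ?thesis
      by (simp add: power_mult[symmetric] power_add[symmetric] algebra_simps divide_divide_eq_left)
  qed
  ultimately show ?thesis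
    by (simp add: sums_iff)
qed

lemma has_integral_cos_series_mult_log_theta_ratio:
  fixes V :: "nat \<Rightarrow> complex"
  assumes V: "summable (\<lambda>m. real (Suc m) * norm (V m))"
  shows "((\<lambda>t. (\<Sum>m. (-1) ^ Suc m * of_nat (Suc m) * V m * of_real (cos (2 * real (Suc m) * t)))
      * log_theta_ratio t) has_integral
      (- of_real pi * (\<Sum>m. (-1) ^ Suc m * V m * q ^ Suc m / (1 - q ^ (2 * Suc m))))) {0..pi}"
proof -
  obtain B where B: "\<And>t. t \<in> {0..pi} \<Longrightarrow> norm (log_theta_ratio t) \<le> B"
    using compact_imp_bounded[OF compact_continuous_image[OF continuous_on_log_theta_ratio compact_Icc]]
    unfolding bounded_iff by blast
  define c where "c m = (-1) ^ Suc m * of_nat (Suc m) * V m" for m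
  define f where "f m t = c m * (of_real (cos (2 * real (Suc m) * t)) * log_theta_ratio t)" for m t
  define T where "T m = (-1) ^ Suc m * V m * q ^ Suc m / (1 - q ^ (2 * Suc m))" for m
  have norm_c: "norm (c m) = real (Suc m) * norm (V m)" for m
    by (simp add: c_def norm_mult norm_power del: of_nat_Suc)
  have cont: "continuous_on {0..pi} (f m)" for m
    unfolding f_def by (intro continuous_intros continuous_on_log_theta_ratio)
  have norm_f: "norm (f m t) \<le> real (Suc m) * norm (V m) * B" if "t \<in> {0..pi}" for m t
  proof -
    have "norm (f m t) = norm (c m) * (\<bar>cos (2 * real (Suc m) * t)\<bar> * norm (log_theta_ratio t))"
      by (simp add: f_def norm_mult)
    also have "\<dots> \<le> norm (c m) * (1 * B)"
      using B[OF that] by (intro mult_left_mono mult_mono) auto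
    finally show ?thesis
      by (simp add: norm_c)
  qed
  have int: "(f m has_integral (- of_real pi * T m)) {0..pi}" for m
  proof -
    have "(f m has_integral c m * (- of_real pi * q ^ Suc m / (of_nat (Suc m) * (1 - q ^ (2 * Suc m))))) {0..pi}"
      unfolding f_def by (intro has_integral_mult_right has_integral_cos_mult_log_theta_ratio) simp
    moreover have "c m * (- of_real pi * q ^ Suc m / (of_nat (Suc m) * (1 - q ^ (2 * Suc m)))) = - of_real pi * T m"
      using one_minus_power_q_nonzero[of "2 * Suc m"]
      by (simp add: c_def T_def field_simps del: of_nat_Suc)
    ultimately show ?thesis
      by simp
  qed
  have int_sum: "((\<lambda>t. \<Sum>m. f m t) has_integral (\<Sum>m. - of_real pi * T m)) {0..pi}"
    and "summable (\<lambda>m. - of_real pi * T m)"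
    using has_integral_suminf[OF cont norm_f summable_mult2[OF V] int] by auto
  then have "summable T"
    using summable_mult[of "\<lambda>m. - of_real pi * T m" "- 1 / of_real pi"] by simp
  then have "(\<Sum>m. - of_real pi * T m) = - of_real pi * (\<Sum>m. T m)"
    by (rule suminf_mult)
  moreover have "(\<Sum>m. f m t) = (\<Sum>m. (-1) ^ Suc m * of_nat (Suc m) * V m * of_real (cos (2 * real (Suc m) * t)))
      * log_theta_ratio t" for t
  proof -
    have sm: "summable (\<lambda>m. (-1) ^ Suc m * of_nat (Suc m) * V m * of_real (cos (2 * real (Suc m) * t)))"
      by (rule summable_norm_cancel[OF summable_norm_cos_series[OF V]])
    show ?thesis
      unfolding f_def c_def suminf_mult2[OF sm] by (simp add: mult_ac)
  qed
  ultimately show ?thesis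
    using int_sum by (simp add: T_def)
qed

end

lemma qpow_0 [simp]: "qpow z 0 = 1"
  by (simp add: qpow_def)

lemma qpow_add: "qpow z (\<alpha> + \<beta>) = qpow z \<alpha> * qpow z \<beta>"
  unfolding qpow_def by (simp add: ring_distribs exp_add)

lemma qpow_minus: "qpow z (- \<alpha>) = inverse (qpow z \<alpha>)"
  unfolding qpow_def by (simp add: exp_minus[symmetric])

lemma qpow_of_int: "qpow z (of_int n) = qpow z 1 powi n"
  unfolding qpow_def by (simp add: exp_power_int mult_ac)

lemma qpow_of_nat: "qpow z (real n) = qpow z 1 ^ n"
  using qpow_of_int[of z "int n"] by simp

lemma norm_qpow: "norm (qpow z \<alpha>) = exp (- (2 * pi * Im z * \<alpha>))"
  unfolding qpow_def by (simp add: norm_exp_eq_Re)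

definition lambert_term :: "complex \<Rightarrow> real \<Rightarrow> real \<Rightarrow> nat \<Rightarrow> complex" where
  "lambert_term z a b n = (-1) ^ n * qpow z (a * real n ^ 2 + (b + 1) * real n) / (1 - qpow z (2 * real n))"

lemma psi2_eq_psi1: "psi2 z a b t = - psi1 z a (- b) t"
  by (simp add: psi1_def psi2_def)

lemma sinh_quotient_eq:
  "(-1) powi n * exp (2 * of_real pi * \<i> * of_real \<alpha> * z) / sinh (2 * of_real pi * \<i> * of_int n * z)
    = -2 * ((-1) powi n * qpow z \<alpha> / (qpow z (- of_int n) - qpow z (of_int n)))"
proof -
  define A B where "A = qpow z (of_int n)" and "B = qpow z (- of_int n)"
  have "sinh (2 * of_real pi * \<i> * of_int n * z) = (A - B) / 2"
    unfolding sinh_def A_def B_def qpow_def by (simp add: mult_ac scaleR_conv_of_real field_simps)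
  moreover have "(-1) powi n * exp (2 * of_real pi * \<i> * of_real \<alpha> * z) = (-1) powi n * qpow z \<alpha>"
    unfolding qpow_def ..
  moreover have "X / ((A - B) / 2) = -2 * (X / (B - A))" for X
    by (cases "A = B") (simp_all add: field_simps)
  ultimately show ?thesis
    unfolding A_def B_def by (simp only:)
qed

locale upper_half_plane =
  fixes z :: complex
  assumes Im_z_pos: "Im z > 0"

sublocale upper_half_plane \<subseteq> nome "qpow z 1"
proof
  show "norm (qpow z 1) < 1"
    using upper_half_plane.Im_z_pos[OF upper_half_plane_axioms] by (simp add: norm_qpow)
  show "qpow z 1 \<noteq> 0"
    by (simp add: qpow_def)
qed

context upper_half_plane
begin

lemma theta4_eq: "theta4 z t = triple_prod (cis (2 * t)) / laurent_coeff 0"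
proof -
  have "exp (2 * \<i> * of_int n * of_real t) = cis (2 * t) powi n" for n :: int
    unfolding cis_power_int unfolding cis_conv_exp by (simp add: mult_ac)
  moreover have "qpow z (of_int n ^ 2) = qpow z 1 powi (n\<^sup>2)" for n :: int
    using qpow_of_int[of z "n\<^sup>2"] by simp
  ultimately show ?thesis
    unfolding theta4_def using infsumI[OF has_sum_theta_series[of t]] by (simp only:)
qed

lemma exp_log_theta_ratio_eq_theta4: "exp (log_theta_ratio t) = theta4 z t / theta4 z 0"
  unfolding theta4_eq exp_log_theta_ratio using laurent_coeff_0_nonzero by simp

lemma log_theta_ratio_unique:
  assumes "continuous_on {0..pi} L" "L 0 = 0" "\<forall>t\<in>{0..pi}. exp (L t) = theta4 z t / theta4 z 0"
    and "t \<in> {0..pi}"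
  shows "L t = log_theta_ratio t"
proof -
  have "exp (L x) = exp (log_theta_ratio x)" if "x \<in> {0..pi}" for x
    using assms(3) that exp_log_theta_ratio_eq_theta4 by simp
  then show ?thesis
    by (rule continuous_exp_eq_imp_eq[where a=0, OF connected_Icc assms(1) continuous_on_log_theta_ratio _ _ _ assms(4)])
      (simp_all add: assms(2))
qed

lemma summable_norm_qpow_quadratic:
  assumes "a > 0"
  shows "summable (\<lambda>n. real n * norm (qpow z (a * real n ^ 2 + c * real n)))"
  using summable_gaussian[of "2 * pi * Im z" a c] Im_z_pos assms by (simp add: norm_qpow)

lemma summable_norm_psi1_terms:
  assumes "a > 0"
  shows "summable (\<lambda>m. norm ((-1) ^ Suc m * of_nat (Suc m) * qpow z (a * real (Suc m) ^ 2 + b * real (Suc m))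
    * of_real (cos (2 * real (Suc m) * t))))"
proof (rule summable_norm_cos_series)
  show "summable (\<lambda>m. real (Suc m) * norm (qpow z (a * real (Suc m) ^ 2 + b * real (Suc m))))"
    using summable_norm_qpow_quadratic[OF assms, of b] by (subst summable_Suc_iff)
qed

lemma psi1_sums:
  assumes "a > 0"
  shows "(\<lambda>m. (-1) ^ Suc m * of_nat (Suc m) * qpow z (a * real (Suc m) ^ 2 + b * real (Suc m))
    * of_real (cos (2 * real (Suc m) * t))) sums psi1 z a b t"
  unfolding psi1_def Let_def by (rule summable_sums[OF summable_norm_cancel[OF summable_norm_psi1_terms[OF assms]]])

lemma lambert_term_eq_qpow:
  "lambert_term z a b n = (-1) ^ n * qpow z (a * real n ^ 2 + b * real n) * qpow z 1 ^ n / (1 - qpow z 1 ^ (2 * n))"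
proof -
  have "a * real n ^ 2 + (b + 1) * real n = (a * real n ^ 2 + b * real n) + real n"
    by (simp add: algebra_simps)
  then show ?thesis
    unfolding lambert_term_def by (simp add: qpow_add qpow_of_nat[symmetric] mult_ac)
qed

lemma psi1_has_integral_log_theta_ratio:
  assumes a: "a > 0"
  shows "((\<lambda>t. psi1 z a b t * log_theta_ratio t) has_integral
    (- of_real pi * (\<Sum>m. lambert_term z a b (Suc m)))) {0..pi}"
proof -
  define V where "V m = qpow z (a * real (Suc m) ^ 2 + b * real (Suc m))" for m
  have "summable (\<lambda>m. real (Suc m) * norm (V m))"
    using summable_norm_qpow_quadratic[OF a, of b] unfolding V_def by (subst summable_Suc_iff)
  from has_integral_cos_series_mult_log_theta_ratio[OF this] show ?thesis
    unfolding psi1_def Let_def V_def lambert_term_eq_qpow by (simp add: mult_ac)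
qed

lemma summable_norm_lambert_term:
  assumes a: "a > 0"
  shows "summable (\<lambda>n. norm (lambert_term z a b n))"
proof (rule summable_comparison_test')
  show "summable (\<lambda>n. real n * norm (qpow z (a * real n ^ 2 + (b + 1) * real n)) / (1 - norm (qpow z 1)))"
    by (intro summable_divide summable_norm_qpow_quadratic a)
  show "norm (norm (lambert_term z a b n)) \<le> real n * norm (qpow z (a * real n ^ 2 + (b + 1) * real n)) / (1 - norm (qpow z 1))"
    for n
  proof (cases "n = 0")
    case False
    have "1 - norm (qpow z 1) \<le> norm (1 - qpow z (2 * real n))"
      using norm_one_minus_power_q_ge[of "2 * n"] False by (simp add: qpow_of_nat[symmetric])
    moreover have "0 < 1 - norm (qpow z 1)"
      using norm_q_less_1 by simp
    ultimately have "norm (lambert_term z a b n) \<le> 1 * norm (qpow z (a * real n ^ 2 + (b + 1) * real n)) / (1 - norm (qpow z 1))"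
      unfolding lambert_term_def by (simp add: norm_mult norm_divide norm_power frac_le)
    also have "\<dots> \<le> real n * norm (qpow z (a * real n ^ 2 + (b + 1) * real n)) / (1 - norm (qpow z 1))"
      using False \<open>0 < 1 - norm (qpow z 1)\<close> by (intro divide_right_mono mult_right_mono) auto
    finally show ?thesis
      by simp
  qed (simp add: lambert_term_def)
qed

lemma lambert_quotient_eq:
  fixes n :: nat
  shows "(-1) ^ n * qpow z (a * real n ^ 2 + b * real n) / (qpow z (- real n) - qpow z (real n))
      = lambert_term z a b n"
proof (cases "n = 0")
  case False
  have "1 - qpow z 1 ^ (2 * n) \<noteq> 0"
    using one_minus_power_q_nonzero[of "2 * n"] False by simp
  moreover have "qpow z 1 ^ n \<noteq> 0"
    using q_nonzero by simp
  ultimately show ?thesis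
    unfolding lambert_term_eq_qpow qpow_minus qpow_of_nat
    by (simp add: field_simps power_mult power2_eq_square mult_2)
qed (simp add: lambert_term_def)

lemma has_sum_lambert_quotient:
  assumes a: "a > 0"
  shows "((\<lambda>n::int. (-1) powi n * qpow z (a * of_int n ^ 2 + b * of_int n) / (qpow z (- of_int n) - qpow z (of_int n)))
    has_sum ((\<Sum>m. lambert_term z a b (Suc m)) - (\<Sum>m. lambert_term z a (- b) (Suc m)))) (UNIV - {0})"
proof -
  define h where "h n = (-1) powi n * qpow z (a * of_int n ^ 2 + b * of_int n) / (qpow z (- of_int n) - qpow z (of_int n))"
    for n :: int
  have pos: "h (int (Suc m)) = lambert_term z a b (Suc m)" for m
    using lambert_quotient_eq[of "Suc m" a b] by (simp add: h_def del: of_nat_Suc)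
  have neg: "h (- int k) = - lambert_term z a (- b) k" for k
  proof -
    have "(-1 :: complex) powi (- int k) = (-1) ^ k"
      by (simp add: power_int_minus power_inverse[symmetric])
    moreover have "a * of_int (- int k) ^ 2 + b * of_int (- int k) = a * real k ^ 2 + - b * real k"
      by simp
    ultimately have "h (- int k) = (-1) ^ k * qpow z (a * real k ^ 2 + - b * real k) / (qpow z (real k) - qpow z (- real k))"
      by (simp add: h_def)
    also have "\<dots> = - ((-1) ^ k * qpow z (a * real k ^ 2 + - b * real k) / (qpow z (- real k) - qpow z (real k)))"
      by (metis minus_diff_eq minus_divide_right)
    finally show ?thesis
      by (simp only: lambert_quotient_eq)
  qed
  have "(h has_sum ((\<Sum>m. lambert_term z a b (Suc m)) + - (\<Sum>m. lambert_term z a (- b) (Suc m)))) (UNIV - {0})"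
  proof (rule has_sum_int_split)
    have summable: "summable (\<lambda>m. norm (lambert_term z a c (Suc m)))" for c
      using summable_norm_lambert_term[OF a, of c] by (subst summable_Suc_iff)
    then show "summable (\<lambda>m. norm (h (int (Suc m))))" "summable (\<lambda>m. norm (h (- int (Suc m))))"
      unfolding pos neg norm_minus_cancel by blast+
    show "(\<lambda>m. h (int (Suc m))) sums (\<Sum>m. lambert_term z a b (Suc m))"
      unfolding pos by (rule summable_sums[OF summable_norm_cancel[OF summable]])
    show "(\<lambda>m. h (- int (Suc m))) sums - (\<Sum>m. lambert_term z a (- b) (Suc m))"
      unfolding neg by (rule sums_minus[OF summable_sums[OF summable_norm_cancel[OF summable]]])
  qed
  then show ?thesis
    by (simp add: h_def[abs_def])
qed

lemma has_sum_sinh_quotient: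
  assumes a: "a > 0"
  shows "((\<lambda>n::int. (-1) powi n * exp (2 * of_real pi * \<i> * of_real (a * of_int n ^ 2 + b * of_int n) * z)
      / sinh (2 * of_real pi * \<i> * of_int n * z))
    has_sum (-2 * ((\<Sum>m. lambert_term z a b (Suc m)) - (\<Sum>m. lambert_term z a (- b) (Suc m))))) (UNIV - {0})"
  unfolding sinh_quotient_eq by (rule has_sum_cmult_right[OF has_sum_lambert_quotient[OF a]])

lemma has_sum_psi:
  assumes a: "a > 0"
  shows "((\<lambda>n::int. (-1) powi n * qpow z (a * of_int n ^ 2 + b * of_int n) * of_int n * of_real (cos (2 * of_int n * t)))
    has_sum psi z a b t) UNIV"
proof -
  define f where "f n = (-1) powi n * qpow z (a * of_int n ^ 2 + b * of_int n) * of_int n * of_real (cos (2 * of_int n * t))"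
    for n :: int
  define p where "p c m = (-1) ^ Suc m * of_nat (Suc m) * qpow z (a * real (Suc m) ^ 2 + c * real (Suc m))
    * of_real (cos (2 * real (Suc m) * t))" for c m
  have pos: "f (int (Suc m)) = p b m" for m
    by (simp add: f_def p_def mult_ac del: of_nat_Suc)
  have neg: "f (- int (Suc m)) = - p (- b) m" for m
    by (simp add: f_def p_def power_int_minus field_simps del: of_nat_Suc)
  have "(f has_sum (psi1 z a b t + psi2 z a b t)) (UNIV - {0})"
  proof (rule has_sum_int_split)
    show "summable (\<lambda>m. norm (f (int (Suc m))))" "summable (\<lambda>m. norm (f (- int (Suc m))))"
      unfolding pos neg norm_minus_cancel p_def by (rule summable_norm_psi1_terms[OF a])+
    show "(\<lambda>m. f (int (Suc m))) sums psi1 z a b t" "(\<lambda>m. f (- int (Suc m))) sums psi2 z a b t"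
      unfolding pos neg psi2_eq_psi1 p_def by (rule psi1_sums[OF a], rule sums_minus, rule psi1_sums[OF a])
  qed
  moreover have "(f has_sum (psi1 z a b t + psi2 z a b t)) (UNIV - {0}) = (f has_sum (psi1 z a b t + psi2 z a b t)) UNIV"
    by (rule has_sum_cong_neutral) (auto simp: f_def)
  ultimately have "(f has_sum psi z a b t) UNIV"
    by (simp add: psi_def)
  then show ?thesis
    unfolding f_def[abs_def] .
qed

end

theorem theorem4:
  fixes z :: complex and a b :: real and L :: "real \<Rightarrow> complex"
  assumes hz: "Im z > 0" and ha: "a > 0"
    and L_cont: "continuous_on {0..pi} L" and L0: "L 0 = 0"
    and L_log: "\<forall>t\<in>{0..pi}. exp (L t) = theta4 z t / theta4 z 0"
  shows
    "summable (\<lambda>m. let n = Suc m in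
        (-1) ^ n * qpow z (a * real n ^ 2 + (b + 1) * real n) / (1 - qpow z (2 * real n)))
     \<and> ((\<lambda>t. psi1 z a b t * L t) has_integral
         (- of_real pi * (\<Sum>m. let n = Suc m in
            (-1) ^ n * qpow z (a * real n ^ 2 + (b + 1) * real n) / (1 - qpow z (2 * real n)))))
        {0..pi}
     \<and> summable (\<lambda>m. let n = Suc m in
        (-1) ^ n * qpow z (a * real n ^ 2 + (- b + 1) * real n) / (1 - qpow z (2 * real n)))
     \<and> ((\<lambda>t. psi2 z a b t * L t) has_integral
         (of_real pi * (\<Sum>m. let n = Suc m in
            (-1) ^ n * qpow z (a * real n ^ 2 + (- b + 1) * real n) / (1 - qpow z (2 * real n)))))
        {0..pi}
     \<and> (\<forall>t. ((\<lambda>n::int. (-1) powi n * qpow z (a * of_int n ^ 2 + b * of_int n)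
                 * of_int n * of_real (cos (2 * of_int n * t))) has_sum psi z a b t) UNIV)
     \<and> (let I = integral {0..pi} (\<lambda>t. psi z a b t * L t) in
          (\<lambda>t. psi z a b t * L t) integrable_on {0..pi}
        \<and> (\<lambda>n::int. (-1) powi n * qpow z (a * of_int n ^ 2 + b * of_int n)
              / (qpow z (- of_int n) - qpow z (of_int n))) summable_on (UNIV - {0})
        \<and> I = - of_real pi * (\<Sum>\<^sub>\<infinity>n\<in>UNIV - {0::int}. (-1) powi n
              * qpow z (a * of_int n ^ 2 + b * of_int n) / (qpow z (- of_int n) - qpow z (of_int n)))
        \<and> (\<lambda>n::int. (-1) powi n * exp (2 * of_real pi * \<i> * of_real (a * of_int n ^ 2 + b * of_int n) * z)
              / sinh (2 * of_real pi * \<i> * of_int n * z)) summable_on (UNIV - {0})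
        \<and> I / of_real pi = 1/2 * (\<Sum>\<^sub>\<infinity>n\<in>UNIV - {0::int}. (-1) powi n
              * exp (2 * of_real pi * \<i> * of_real (a * of_int n ^ 2 + b * of_int n) * z)
              / sinh (2 * of_real pi * \<i> * of_int n * z)))"
proof -
  interpret upper_half_plane z
    by unfold_locales (rule hz)
  define Y where "Y c = (\<Sum>m. lambert_term z a c (Suc m))" for c
  have terms: "(\<lambda>m. let n = Suc m in (-1) ^ n * qpow z (a * real n ^ 2 + (c + 1) * real n)
      / (1 - qpow z (2 * real n))) = (\<lambda>m. lambert_term z a c (Suc m))" for c
    by (simp add: lambert_term_def)
  have summable: "summable (\<lambda>m. lambert_term z a c (Suc m))" for c
    using summable_norm_lambert_term[OF ha, of c] by (subst summable_Suc_iff) (rule summable_norm_cancel)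
  have psi1_int: "((\<lambda>t. psi1 z a c t * L t) has_integral - of_real pi * Y c) {0..pi}" for c
    using psi1_has_integral_log_theta_ratio[OF ha, of c] log_theta_ratio_unique[OF L_cont L0 L_log]
    by (subst has_integral_cong[where g="\<lambda>t. psi1 z a c t * log_theta_ratio t"]) (simp_all add: Y_def)
  have psi2_int: "((\<lambda>t. psi2 z a b t * L t) has_integral of_real pi * Y (- b)) {0..pi}"
    using has_integral_neg[OF psi1_int[of "- b"]] by (simp add: psi2_eq_psi1)
  have psi_int: "((\<lambda>t. psi z a b t * L t) has_integral - of_real pi * (Y b - Y (- b))) {0..pi}"
    using has_integral_add[OF psi1_int[of b] psi2_int] by (simp add: psi_def distrib_right algebra_simps)
  note quotient = has_sum_lambert_quotient[OF ha, of b, folded Y_def]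
  note sinh = has_sum_sinh_quotient[OF ha, of b, folded Y_def]
  have "- of_real pi * (Y b - Y (- b)) / of_real pi = 1 / 2 * (-2 * (Y b - Y (- b)))"
    by simp
  then show ?thesis
    unfolding terms unfolding Y_def[symmetric] Let_def integral_unique[OF psi_int] infsumI[OF quotient] infsumI[OF sinh]
    using summable psi1_int[of b] psi2_int has_sum_psi[OF ha] has_integral_integrable[OF psi_int]
      has_sum_imp_summable[OF quotient] has_sum_imp_summable[OF sinh]
    by blast
qed

end
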